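(* Let $G^{\mathcal X}_r=(V_r,E^{\mathcal X}_r,s_r)$ be an extraction order. An edge $e\in E^{\mathcal X}_r$ is labeled with $j\in V_r$ (i.e., $j\in\mathcal L_e$) if and only if there exists a node $i\in V_r$ such that (i) $e$ lies on a directed path from $i$ to $j$ in $E^{\mathcal X}_r$, i.e., $e\in E_{i\leadsto j}$, and (ii) a confluence from $i$ to $j$ exists.
   Context: An extraction order of a directed graph $G_r=(V_r,E_r)$ is a rooted directed acyclic graph $G^{\mathcal X}_r=(V_r,E^{\mathcal X}_r,s_r)$ in which every node is reachable from $s_r$ and $E^{\mathcal X}_r$ is obtained from $E_r$ by reversing some (possibly no) edges. A confluence from $i$ to $j$ is a pair of directed paths in $E^{\mathcal X}_r$ from $i$ to $j$ sharing no node other than $i$ and $j$; it contains the edges of both paths. For $e\in E^{\mathcal X}_r$, $\mathcal L_e$ is the set of nodes $j$ such that $e$ belongs to some confluence with target $j$. $E_{i\leadsto j}$ denotes the set of edges of $E^{\mathcal X}_r$ that lie on some directed path from $i$ to $j$. *)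

theory Defs
  imports Main
begin

definition digraph :: "'a set \<Rightarrow> ('a \<times> 'a) set \<Rightarrow> bool" where
  "digraph V E \<longleftrightarrow> finite V \<and> E \<subseteq> V \<times> V"

definition extraction_order ::
  "'a set \<Rightarrow> ('a \<times> 'a) set \<Rightarrow> ('a \<times> 'a) set \<Rightarrow> 'a \<Rightarrow> bool" where
  "extraction_order V E Eo s \<longleftrightarrow>
     digraph V E \<and> s \<in> V \<and> acyclic Eo \<and>
     (\<exists>R \<subseteq> E. Eo = (E - R) \<union> R\<inverse>) \<and>
     (\<forall>v\<in>V. (s, v) \<in> Eo\<^sup>*)"

definition dpath :: "('a \<times> 'a) set \<Rightarrow> 'a list \<Rightarrow> 'a \<Rightarrow> 'a \<Rightarrow> bool" where
  "dpath Eo p i j \<longleftrightarrow> p \<noteq> [] \<and> hd p = i \<and> last p = j \<and> distinct p \<and>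
     (\<forall>k. Suc k < length p \<longrightarrow> (p ! k, p ! Suc k) \<in> Eo)"

definition path_edges :: "'a list \<Rightarrow> ('a \<times> 'a) set" where
  "path_edges p = set (zip p (tl p))"

definition confluence ::
  "('a \<times> 'a) set \<Rightarrow> 'a \<Rightarrow> 'a \<Rightarrow> 'a list \<Rightarrow> 'a list \<Rightarrow> bool" where
  "confluence Eo i j p q \<longleftrightarrow> dpath Eo p i j \<and> dpath Eo q i j \<and> p \<noteq> q \<and>
     set p \<inter> set q \<subseteq> {i, j}"

definition labels :: "('a \<times> 'a) set \<Rightarrow> 'a \<times> 'a \<Rightarrow> 'a set" where
  "labels Eo e = {j. \<exists>i p q. confluence Eo i j p q \<and> e \<in> path_edges p \<union> path_edges q}"

definition reach_edges :: "('a \<times> 'a) set \<Rightarrow> 'a \<Rightarrow> 'a \<Rightarrow> ('a \<times> 'a) set" where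
  "reach_edges Eo i j = {e. \<exists>p. dpath Eo p i j \<and> e \<in> path_edges p}"

end

theory Submission
  imports Defs
begin

text \<open>Let C be the node set of a confluence (p, q) from i to j
  and let e lie on a path from i to j. If e is not already
  on the confluence, cut the path to the maximal segment S through e whose
  inner nodes avoid C (a bridge); it runs from some x \<in> C to some w \<in> C.
  Say x \<in> p. If also w \<in> p, acyclicity puts w after x
  on p, and replacing the part of p between them by S gives a new
  confluence from i to j. Otherwise w \<in> q, and the rest of
  p after x together with S followed by the rest of q after
  w is a confluence from x to j. Either way e lies on a
  confluence with target j.\<close>

lemma path_edges_Nil [simp]: "path_edges [] = {}"
  by (simp add: path_edges_def)

lemma path_edges_singleton [simp]: "path_edges [x] = {}"
  by (simp add: path_edges_def)

lemma path_edges_Cons_Cons [simp]: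
  "path_edges (x # y # zs) = insert (x, y) (path_edges (y # zs))"
  by (simp add: path_edges_def)

lemma path_edges_append:
  "path_edges (xs @ ys) = path_edges xs \<union> path_edges ys \<union>
     (if xs = [] \<or> ys = [] then {} else {(last xs, hd ys)})"
  by (induction xs) (auto simp: neq_Nil_conv)

lemma path_edges_append_tl:
  assumes "xs \<noteq> []" "ys \<noteq> []" "last xs = hd ys"
  shows "path_edges (xs @ tl ys) = path_edges xs \<union> path_edges ys"
  using assms path_edges_append[of xs "tl ys"] by (cases ys; cases "tl ys") auto

lemma path_edges_split: "(a, b) \<in> path_edges P \<Longrightarrow> \<exists>A B. P = A @ a # b # B"
proof (induction P rule: induct_list012)
  case (3 x y zs)
  then show ?case by (auto intro: exI[of _ "[]"]) (metis append_Cons)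
qed simp_all

lemma path_edges_conv_nth:
  "path_edges p = {(p ! k, p ! Suc k) | k. Suc k < length p}"
  unfolding path_edges_def set_zip by (auto simp: nth_tl)

lemma dpath_iff_path_edges:
  "dpath Eo p i j \<longleftrightarrow>
     p \<noteq> [] \<and> hd p = i \<and> last p = j \<and> distinct p \<and> path_edges p \<subseteq> Eo"
  unfolding dpath_def path_edges_conv_nth by blast

lemma path_edges_rtrancl:
  "path_edges p \<subseteq> Eo \<Longrightarrow> p \<noteq> [] \<Longrightarrow> (hd p, last p) \<in> Eo\<^sup>*"
  by (induction p rule: induct_list012) (auto intro: converse_rtrancl_into_rtrancl)

lemma dpath_trancl: "dpath Eo p a b \<Longrightarrow> a \<noteq> b \<Longrightarrow> (a, b) \<in> Eo\<^sup>+"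
  using path_edges_rtrancl[of p Eo] by (auto simp: dpath_iff_path_edges rtrancl_eq_or_trancl)

lemma dpath_loop: "dpath Eo p a a \<Longrightarrow> p = [a]"
  unfolding dpath_iff_path_edges
  by (metis distinct.simps(2) hd_Cons_tl last_ConsR last_in_set list.collapse)

lemma dpath_ends_in_set: "dpath Eo p a b \<Longrightarrow> a \<in> set p \<and> b \<in> set p"
  by (auto simp: dpath_iff_path_edges)

lemma dpath_append_tl:
  assumes "dpath Eo xs a b" "dpath Eo ys b c" "set xs \<inter> set ys \<subseteq> {b}"
  shows "dpath Eo (xs @ tl ys) a c"
    and "set (xs @ tl ys) = set xs \<union> set ys"
    and "path_edges (xs @ tl ys) = path_edges xs \<union> path_edges ys"
proof -
  have xs: "xs \<noteq> []" "hd xs = a" "last xs = b" "distinct xs" "path_edges xs \<subseteq> Eo"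
    using assms(1) by (auto simp: dpath_iff_path_edges)
  obtain ys' where ys': "ys = b # ys'" "last ys = c" "distinct ys" "path_edges ys \<subseteq> Eo"
    using assms(2) by (auto simp: dpath_iff_path_edges neq_Nil_conv)
  show "set (xs @ tl ys) = set xs \<union> set ys"
    using xs ys' by (auto dest: last_in_set)
  show edges: "path_edges (xs @ tl ys) = path_edges xs \<union> path_edges ys"
    using path_edges_append_tl[of xs ys] xs ys' by simp
  have "last (xs @ tl ys) = c" using xs ys' by (cases ys') auto
  then show "dpath Eo (xs @ tl ys) a c"
    using xs ys' assms(3) edges by (auto simp: dpath_iff_path_edges)
qed

lemma dpath_split:
  assumes "dpath Eo p a c" "x \<in> set p"
  obtains p1 p2 where "dpath Eo p1 a x" "dpath Eo p2 x c" "set p1 \<inter> set p2 = {x}" "set p = set p1 \<union> set p2"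
    "path_edges p = path_edges p1 \<union> path_edges p2"
proof -
  obtain ys zs where p: "p = ys @ x # zs" using assms(2) split_list by metis
  have d: "hd p = a" "last p = c" "distinct p" "path_edges p \<subseteq> Eo"
    using assms(1) by (auto simp: dpath_iff_path_edges)
  have edges: "path_edges p = path_edges (ys @ [x]) \<union> path_edges (x # zs)"
    using path_edges_append_tl[of "ys @ [x]" "x # zs"] p by simp
  have "dpath Eo (ys @ [x]) a x" "dpath Eo (x # zs) x c"
    using d p edges by (auto simp: dpath_iff_path_edges hd_append split: if_splits)
  moreover have "set (ys @ [x]) \<inter> set (x # zs) = {x}" using d p by auto
  ultimately show thesis using that p edges by simp
qed

lemma dpath_infix:
  assumes "dpath Eo (xs @ S @ ys) a b" "S \<noteq> []"
  shows "dpath Eo S (hd S) (last S)"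
proof -
  have "path_edges S \<subseteq> path_edges (xs @ S @ ys)"
    using path_edges_append[of S ys] path_edges_append[of xs "S @ ys"] by auto
  then show ?thesis using assms by (auto simp: dpath_iff_path_edges)
qed

lemma confluence_ends_distinct: "confluence Eo i j p q \<Longrightarrow> i \<noteq> j"
  unfolding confluence_def using dpath_loop by metis

lemma confluence_swap: "confluence Eo i j p q \<Longrightarrow> confluence Eo i j q p"
  unfolding confluence_def by auto

lemma labelsI:
  "confluence Eo i j p q \<Longrightarrow> e \<in> path_edges p \<union> path_edges q \<Longrightarrow> j \<in> labels Eo e"
  unfolding labels_def by blast

lemma confluence_reroute_same_side:
  assumes acy: "acyclic Eo" and conf: "confluence Eo i j p q"
    and S: "dpath Eo S x w" and "x \<noteq> w" and "x \<in> set p" and "w \<in> set p" and "w \<noteq> j"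
    and S_meets: "set S \<inter> (set p \<union> set q) \<subseteq> {x, w}"
    and S_new: "\<not> path_edges S \<subseteq> path_edges q"
  shows "\<exists>p'. confluence Eo i j p' q \<and> path_edges S \<subseteq> path_edges p'"
proof -
  have dp: "dpath Eo p i j" and pq: "set p \<inter> set q \<subseteq> {i, j}"
    using conf unfolding confluence_def by auto
  obtain p1 p2 where p1: "dpath Eo p1 i x" and p2: "dpath Eo p2 x j"
    and p12: "set p1 \<inter> set p2 = {x}" and set_p: "set p = set p1 \<union> set p2"
    using dpath_split[OF dp \<open>x \<in> set p\<close>] by metis
  have "w \<in> set p2"
  proof (rule ccontr)
    assume "w \<notin> set p2"
    then obtain r where "dpath Eo r w x"
      using set_p \<open>w \<in> set p\<close> dpath_split[OF p1] by (metis UnE)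
    then have "(w, x) \<in> Eo\<^sup>+" using dpath_trancl \<open>x \<noteq> w\<close> by metis
    moreover have "(x, w) \<in> Eo\<^sup>+" using dpath_trancl S \<open>x \<noteq> w\<close> by metis
    ultimately show False using acy unfolding acyclic_def by (meson trancl_trans)
  qed
  then obtain p3 p4 where p4: "dpath Eo p4 w j" and "x \<in> set p3"
    and p34: "set p3 \<inter> set p4 = {w}" and set_p2: "set p2 = set p3 \<union> set p4"
    using dpath_split[OF p2] dpath_ends_in_set by metis
  have "set p1 \<inter> set S \<subseteq> {x}"
    using S_meets set_p p12 \<open>w \<in> set p2\<close> \<open>x \<noteq> w\<close> by auto
  note J1 = dpath_append_tl[OF p1 S this]
  have "set (p1 @ tl S) \<inter> set p4 \<subseteq> {w}"
    using J1(2) S_meets set_p set_p2 p12 p34 \<open>x \<in> set p3\<close> \<open>x \<noteq> w\<close> by auto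
  note J2 = dpath_append_tl[OF J1(1) p4 this]
  define p' where "p' = (p1 @ tl S) @ tl p4"
  have "set p' \<inter> set q \<subseteq> set p \<inter> set q"
    using J1(2) J2(2) S_meets set_p set_p2 \<open>x \<in> set p\<close> \<open>w \<in> set p\<close>
    unfolding p'_def by auto
  moreover have "path_edges S \<subseteq> path_edges p'" using J1(3) J2(3) p'_def by auto
  ultimately have "confluence Eo i j p' q"
    using J2(1) conf pq S_new unfolding confluence_def p'_def by auto
  then show ?thesis using \<open>path_edges S \<subseteq> path_edges p'\<close> by blast
qed

lemma confluence_reroute_cross:
  assumes conf: "confluence Eo i j p q"
    and S: "dpath Eo S x w" and "x \<in> set p" and "x \<noteq> j" and "w \<in> set q" and "w \<noteq> i"
    and S_meets: "set S \<inter> (set p \<union> set q) \<subseteq> {x, w}"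
    and S_new: "\<not> path_edges S \<subseteq> path_edges p"
  shows "\<exists>p' q'. confluence Eo x j p' q' \<and> path_edges S \<subseteq> path_edges q'"
proof -
  have dp: "dpath Eo p i j" and dq: "dpath Eo q i j" and pq: "set p \<inter> set q \<subseteq> {i, j}"
    using conf unfolding confluence_def by auto
  obtain p2 where p2: "dpath Eo p2 x j" "set p2 \<subseteq> set p" "path_edges p2 \<subseteq> path_edges p"
    using dpath_split[OF dp \<open>x \<in> set p\<close>] by (metis Un_upper2)
  obtain q1 q2 where "dpath Eo q1 i w" and q2: "dpath Eo q2 w j"
    and q12: "set q1 \<inter> set q2 = {w}" and set_q: "set q = set q1 \<union> set q2"
    using dpath_split[OF dq \<open>w \<in> set q\<close>] by metis
  then have i_q2: "i \<notin> set q2" using \<open>w \<noteq> i\<close> dpath_ends_in_set by fastforce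
  have "x \<notin> set q2" using i_q2 \<open>x \<noteq> j\<close> \<open>x \<in> set p\<close> pq set_q by auto
  then have "set S \<inter> set q2 \<subseteq> {w}" using S_meets set_q by auto
  note J = dpath_append_tl[OF S q2 this]
  define r where "r = S @ tl q2"
  have "w \<in> set p \<Longrightarrow> w = j" using pq \<open>w \<in> set q\<close> \<open>w \<noteq> i\<close> by auto
  then have "set p2 \<inter> set S \<subseteq> {x, j}" using S_meets p2(2) by auto
  moreover have "set p2 \<inter> set q2 \<subseteq> {j}" using p2(2) set_q pq i_q2 by auto
  ultimately have "set p2 \<inter> set r \<subseteq> {x, j}" using J(2) unfolding r_def by auto
  moreover have "p2 \<noteq> r" using J(3) p2(3) S_new unfolding r_def by auto
  ultimately have "confluence Eo x j p2 r"
    using p2(1) J(1) unfolding confluence_def r_def by auto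
  moreover have "path_edges S \<subseteq> path_edges r" using J(3) r_def by auto
  ultimately show ?thesis by blast
qed

lemma bridge_edge_in_labels:
  assumes acy: "acyclic Eo" and conf: "confluence Eo i j p q"
    and S: "dpath Eo S x w" and "x \<noteq> w" and "x \<noteq> j"
    and "x \<in> set p \<union> set q" and "w \<in> set p \<union> set q"
    and S_meets: "set S \<inter> (set p \<union> set q) \<subseteq> {x, w}"
    and "e \<in> path_edges S"
  shows "j \<in> labels Eo e"
proof -
  have labelled: "j \<in> labels Eo e"
    if conf': "confluence Eo i j p' q'" and "x \<in> set p'" and "w \<in> set p' \<union> set q'"
      and "set S \<inter> (set p' \<union> set q') \<subseteq> {x, w}" for p' q'
  proof (cases "e \<in> path_edges p' \<union> path_edges q'")
    case True
    then show ?thesis using labelsI[OF conf'] by blast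
  next
    case False
    then have S_new: "\<not> path_edges S \<subseteq> path_edges p'" "\<not> path_edges S \<subseteq> path_edges q'"
      using \<open>e \<in> path_edges S\<close> by auto
    show ?thesis
    proof (cases "w \<in> set p' \<and> w \<noteq> j")
      case True
      then show ?thesis
        using confluence_reroute_same_side[OF acy conf' S] that S_new \<open>x \<noteq> w\<close> \<open>e \<in> path_edges S\<close>
        by (blast intro: labelsI)
    next
      case False
      have "i \<in> set p'" using conf' dpath_ends_in_set unfolding confluence_def by metis
      then have "w \<in> set q'" "w \<noteq> i"
        using False that(3) confluence_ends_distinct[OF conf'] conf'
        by (auto simp: confluence_def dest: dpath_ends_in_set)
      then show ?thesis
        using confluence_reroute_cross[OF conf' S] that S_new \<open>x \<noteq> j\<close> \<open>e \<in> path_edges S\<close>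
        by (blast intro: labelsI)
    qed
  qed
  show ?thesis
  proof (cases "x \<in> set p")
    case True
    then show ?thesis using labelled[OF conf] assms by blast
  next
    case False
    then show ?thesis using labelled[OF confluence_swap[OF conf]] assms by blast
  qed
qed

lemma dpath_bridge_through_edge:
  assumes P: "dpath Eo P i j" and "e \<in> path_edges P" and "i \<in> C" and "j \<in> C"
  obtains S x w where "dpath Eo S x w" "e \<in> path_edges S" "x \<in> C" "w \<in> C"
    "x \<noteq> w" "x \<noteq> j" "set S \<inter> C \<subseteq> {x, w}"
proof -
  obtain a b where e: "e = (a, b)" by (cases e)
  then obtain A B where PAB: "P = (A @ [a]) @ (b # B)"
    using \<open>e \<in> path_edges P\<close> path_edges_split by fastforce
  have "i \<in> set (A @ [a])" using P PAB by (cases A) (auto simp: dpath_iff_path_edges)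
  then obtain A1 x A2 where A: "A @ [a] = A1 @ x # A2" "x \<in> C" "\<forall>y\<in>set A2. y \<notin> C"
    using split_list_last_prop[of "A @ [a]" "\<lambda>y. y \<in> C"] \<open>i \<in> C\<close> by blast
  have "j \<in> set (b # B)" using P PAB by (auto simp: dpath_iff_path_edges)
  then obtain B1 w B2 where B: "b # B = B1 @ w # B2" "w \<in> C" "\<forall>y\<in>set B1. y \<notin> C"
    using split_list_first_prop[of "b # B" "\<lambda>y. y \<in> C"] \<open>j \<in> C\<close> by blast
  define S where "S = (x # A2) @ (B1 @ [w])"
  have P_S: "P = A1 @ S @ B2" using PAB A(1) B(1) by (simp add: S_def)
  have "last (x # A2) = a" using arg_cong[OF A(1), of last] by simp
  moreover have "hd (B1 @ [w]) = b" using B(1) by (cases B1) auto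
  ultimately have "e \<in> path_edges S"
    using e path_edges_append[of "x # A2" "B1 @ [w]"] unfolding S_def by auto
  moreover have "dpath Eo S x w" using dpath_infix[of Eo A1 S B2] P P_S by (simp add: S_def)
  moreover have "x \<noteq> w" "x \<noteq> j"
  proof -
    have "distinct P" "last P = j" using P by (auto simp: dpath_iff_path_edges)
    then show "x \<noteq> w" "x \<noteq> j" using P_S by (auto simp: S_def split: if_splits)
  qed
  moreover have "set S \<inter> C \<subseteq> {x, w}" using A(3) B(3) S_def by auto
  ultimately show thesis using that A(2) B(2) by blast
qed

lemma extraction_order_edges_subset:
  assumes "extraction_order V E Eo s"
  shows "Eo \<subseteq> V \<times> V"
proof -
  obtain R where "R \<subseteq> E" "Eo = (E - R) \<union> R\<inverse>" and "E \<subseteq> V \<times> V"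
    using assms unfolding extraction_order_def digraph_def by blast
  then show ?thesis by auto
qed

theorem lemma13:
  fixes V :: "'a set" and E Eo :: "('a \<times> 'a) set" and s j :: 'a and e :: "'a \<times> 'a"
  assumes "extraction_order V E Eo s"
    and "e \<in> Eo"
    and "j \<in> V"
  shows "j \<in> labels Eo e \<longleftrightarrow>
         (\<exists>i\<in>V. e \<in> reach_edges Eo i j \<and> (\<exists>p q. confluence Eo i j p q))"
proof
  assume "j \<in> labels Eo e"
  then obtain i p q where conf: "confluence Eo i j p q"
    and e_pq: "e \<in> path_edges p \<union> path_edges q"
    unfolding labels_def by blast
  have dp: "dpath Eo p i j" and dq: "dpath Eo q i j" using conf unfolding confluence_def by auto
  then have "e \<in> reach_edges Eo i j" using e_pq unfolding reach_edges_def by blast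
  moreover obtain k where "(i, k) \<in> Eo"
    using dpath_trancl[OF dp confluence_ends_distinct[OF conf]] by (auto dest: tranclD)
  then have "i \<in> V" using extraction_order_edges_subset[OF assms(1)] by auto
  ultimately show "\<exists>i\<in>V. e \<in> reach_edges Eo i j \<and> (\<exists>p q. confluence Eo i j p q)"
    using conf by blast
next
  assume "\<exists>i\<in>V. e \<in> reach_edges Eo i j \<and> (\<exists>p q. confluence Eo i j p q)"
  then obtain i P p q where P: "dpath Eo P i j" and e_P: "e \<in> path_edges P"
    and conf: "confluence Eo i j p q"
    unfolding reach_edges_def by blast
  have "dpath Eo p i j" using conf unfolding confluence_def by simp
  then have "i \<in> set p \<union> set q" "j \<in> set p \<union> set q" using dpath_ends_in_set by fast+
  then obtain S x w where "dpath Eo S x w" "x \<noteq> w" "x \<noteq> j"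
    "x \<in> set p \<union> set q" "w \<in> set p \<union> set q" "set S \<inter> (set p \<union> set q) \<subseteq> {x, w}"
    "e \<in> path_edges S"
    by (rule dpath_bridge_through_edge[OF P e_P])
  moreover have "acyclic Eo" using assms(1) by (simp add: extraction_order_def)
  ultimately show "j \<in> labels Eo e" using bridge_edge_in_labels conf by metis
qed

end
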